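(* Let $r\ge2$, $n\ge2r$, and let $H\subseteq\binom{\Omega_n}{r}$ be $M_1^{(r)}$-saturated. Then: (1) for all $i$, $\rho(v_{i+1})=\lambda(v_i)$; (2) for all distinct $v_i,v_j$, $|[\rho(v_i),\lambda(v_i)]\cap[\rho(v_j),\lambda(v_j)]|\le1$; (3) for every $j$, there is exactly one vertex $v_i$ such that the interval $[\rho(v_i),\lambda(v_i)]$ contains both $v_j$ and $v_{j+1}$; (4) if $\lambda(v_i)\neq\rho(v_i)$, then $\lambda(\rho(v_i))=v_i$ and $\rho(\rho(v_i))\in[\lambda(v_i),v_i)$.
   Context: $\Omega_n=\{v_0,\dots,v_{n-1}\}$ with cyclic order $v_0<\dots<v_{n-1}<v_0$, indices mod $n$. For distinct vertices $u,w$, $(u,w)$ is the set of vertices strictly between $u$ and $w$ moving clockwise from $u$ to $w$; $[u,w]=(u,w)\cup\{u,w\}$, $[u,w)=(u,w)\cup\{u\}$; $[u,u]=\{u\}$. An $r$-cgh $H\subseteq\binom{\Omega_n}{r}$ is $M_1^{(r)}$-saturated if there are no edges $h_1,h_2\in H$ and vertices $u\neq u'$ with $h_1\subseteq[u,u']$ and $h_2\cap[u,u']=\emptyset$, but for every $e\in\binom{\Omega_n}{r}\setminus H$ such a pair exists in $H\cup\{e\}$. In such $H$ every vertex lies in an edge. $\lambda(v_i)$ is the vertex $u$ such that some $h\in H$ with $v_i\in h$ satisfies $h\subseteq[u,v_i]$, while no $h\in H$ with $v_i\in h$ satisfies $h\subseteq[u',v_i]$, $u'$ the clockwise successor of $u$.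 $\rho(v_i)$ is the vertex $u$ such that some $h\in H$ with $v_i\in h$ satisfies $h\subseteq[v_i,u]$ but none with $h\subseteq[v_i,u'']$, $u''$ the clockwise predecessor of $u$. *)

theory Defs
  imports Main
begin

text \<open>Vertices of \<Omega>_n are represented by 0,...,n-1 (vertex v_i is i), indices mod n.\<close>

definition cyc_vertices :: "nat \<Rightarrow> nat set" where
  "cyc_vertices n = {0..<n}"

text \<open>Closed clockwise interval [u,w]; for u = w this is {u}.\<close>
definition cint :: "nat \<Rightarrow> nat \<Rightarrow> nat \<Rightarrow> nat set" where
  "cint n u w = {(u + k) mod n | k. k \<le> (w + n - u) mod n}"

definition cint_ho :: "nat \<Rightarrow> nat \<Rightarrow> nat \<Rightarrow> nat set" where
  "cint_ho n u w = {(u + k) mod n | k. k < (w + n - u) mod n}"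

definition succ_v :: "nat \<Rightarrow> nat \<Rightarrow> nat" where
  "succ_v n u = (u + 1) mod n"

definition pred_v :: "nat \<Rightarrow> nat \<Rightarrow> nat" where
  "pred_v n u = (u + n - 1) mod n"

definition M1_free :: "nat \<Rightarrow> nat set set \<Rightarrow> bool" where
  "M1_free n H \<longleftrightarrow> \<not> (\<exists>h1\<in>H. \<exists>h2\<in>H. \<exists>u<n. \<exists>u'<n. u \<noteq> u' \<and>
       h1 \<subseteq> cint n u u' \<and> h2 \<inter> cint n u u' = {})"

definition M1_saturated :: "nat \<Rightarrow> nat \<Rightarrow> nat set set \<Rightarrow> bool" where
  "M1_saturated n r H \<longleftrightarrow>
     H \<subseteq> {e. e \<subseteq> cyc_vertices n \<and> card e = r} \<and> M1_free n H \<and>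
     (\<forall>e. e \<subseteq> cyc_vertices n \<and> card e = r \<and> e \<notin> H \<longrightarrow> \<not> M1_free n (insert e H))"

definition lam :: "nat \<Rightarrow> nat set set \<Rightarrow> nat \<Rightarrow> nat" where
  "lam n H v = (THE u. u < n \<and>
      (\<exists>h\<in>H. v \<in> h \<and> h \<subseteq> cint n u v) \<and>
      \<not> (\<exists>h\<in>H. v \<in> h \<and> h \<subseteq> cint n (succ_v n u) v))"

definition rho :: "nat \<Rightarrow> nat set set \<Rightarrow> nat \<Rightarrow> nat" where
  "rho n H v = (THE u. u < n \<and>
      (\<exists>h\<in>H. v \<in> h \<and> h \<subseteq> cint n v u) \<and>
      \<not> (\<exists>h\<in>H. v \<in> h \<and> h \<subseteq> cint n v (pred_v n u)))"

end

theory Submission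
  imports Defs
begin

text \<open>
  Call a vertex set a transversal if it meets every edge of \<open>H\<close>. By \<open>M\<^sub>1\<close>-freeness every arc
  containing an edge is a transversal; saturation gives the converse through an exchange argument:
  replacing one vertex of an edge by a vertex of a transversal arc gives an \<open>r\<close>-set every covering
  arc of which contains the old edge or the transversal arc, so the new set is again an edge.
  Consequently the arc \<open>[w, v]\<close> is a transversal iff it contains \<open>\<lambda>(v)\<close>, and \<open>[v, w]\<close> iff it
  contains \<open>\<rho>(v)\<close>; so \<open>x \<in> [\<rho>(v), \<lambda>(v)]\<close> iff both arcs between \<open>v\<close> and \<open>x\<close> are transversals,
  a relation symmetric in \<open>v\<close> and \<open>x\<close>. Two disjoint arcs cannot both contain an edge, and two
  common points of \<open>[\<rho>(i), \<lambda>(i)]\<close> and \<open>[\<rho>(j), \<lambda>(j)]\<close> would yield two such arcs: this is (2).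
  Comparing the transversal arcs starting at \<open>v + 1\<close> with those ending at \<open>v\<close> gives (1), and (3)
  follows from (1), (2) and the symmetry. For (4), the edge through \<open>v\<close> inside \<open>[\<lambda>(v), v]\<close> is
  disjoint from the arcs that would have to be transversals if \<open>\<lambda>(\<rho>(v))\<close> or \<open>\<rho>(\<rho>(v))\<close> were
  elsewhere.
\<close>

section \<open>Clockwise intervals\<close>

definition cdist :: "nat \<Rightarrow> nat \<Rightarrow> nat \<Rightarrow> nat" where
  "cdist n a b = (b + n - a) mod n"

lemma cdist_eq: "a < n \<Longrightarrow> b < n \<Longrightarrow> cdist n a b = (if a \<le> b then b - a else b + n - a)"
  by (auto simp: cdist_def mod_if)

lemma succ_v_eq: "u < n \<Longrightarrow> succ_v n u = (if u + 1 = n then 0 else u + 1)"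
  unfolding succ_v_def by auto

lemma pred_v_eq: "u < n \<Longrightarrow> pred_v n u = (if u = 0 then n - 1 else u - 1)"
  by (auto simp: pred_v_def mod_if)

lemma succ_v_less: "u < n \<Longrightarrow> succ_v n u < n"
  by (simp add: succ_v_def)

lemma pred_v_less: "u < n \<Longrightarrow> pred_v n u < n"
  by (simp add: pred_v_def)

lemma mem_cint_iff_cdist:
  assumes "u < n" "w < n"
  shows "x \<in> cint n u w \<longleftrightarrow> x < n \<and> cdist n u x \<le> cdist n u w"
proof
  assume "x \<in> cint n u w"
  then obtain k where x: "x = (u + k) mod n" and k: "k \<le> cdist n u w"
    unfolding cint_def cdist_def by auto
  moreover have "k < n"
    using k assms by (auto simp: cdist_eq split: if_splits)
  ultimately show "x < n \<and> cdist n u x \<le> cdist n u w"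
    using assms by (auto simp: cdist_eq mod_if)
next
  assume x: "x < n \<and> cdist n u x \<le> cdist n u w"
  then have "x = (u + cdist n u x) mod n"
    using assms by (auto simp: cdist_eq mod_if)
  then show "x \<in> cint n u w"
    using x unfolding cint_def by (auto simp: cdist_def)
qed

lemma mem_cint_ho_iff_cdist:
  assumes "u < n" "w < n"
  shows "x \<in> cint_ho n u w \<longleftrightarrow> x < n \<and> cdist n u x < cdist n u w"
proof
  assume "x \<in> cint_ho n u w"
  then obtain k where x: "x = (u + k) mod n" and k: "k < cdist n u w"
    unfolding cint_ho_def cdist_def by auto
  moreover have "k < n"
    using k assms by (auto simp: cdist_eq split: if_splits)
  ultimately show "x < n \<and> cdist n u x < cdist n u w"
    using assms by (auto simp: cdist_eq mod_if)
next
  assume x: "x < n \<and> cdist n u x < cdist n u w"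
  then have "x = (u + cdist n u x) mod n"
    using assms by (auto simp: cdist_eq mod_if)
  then show "x \<in> cint_ho n u w"
    using x unfolding cint_ho_def by (auto simp: cdist_def)
qed

lemma mem_cint_iff:
  "u < n \<Longrightarrow> w < n \<Longrightarrow>
    x \<in> cint n u w \<longleftrightarrow> x < n \<and> (if u \<le> w then u \<le> x \<and> x \<le> w else u \<le> x \<or> x \<le> w)"
  by (auto simp: mem_cint_iff_cdist cdist_eq split: if_splits)

lemma mem_cint_iff_cdist_end:
  assumes "u < n" "w < n"
  shows "x \<in> cint n u w \<longleftrightarrow> x < n \<and> cdist n x w \<le> cdist n u w"
  unfolding mem_cint_iff[OF assms] using assms by (cases "x < n"; simp add: cdist_eq; arith)

lemma cint_subset_lessThan: "u < n \<Longrightarrow> w < n \<Longrightarrow> cint n u w \<subseteq> {..<n}"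
  by (auto simp: mem_cint_iff)

lemma start_mem_cint: "u < n \<Longrightarrow> w < n \<Longrightarrow> u \<in> cint n u w"
  by (auto simp: mem_cint_iff)

lemma end_mem_cint: "u < n \<Longrightarrow> w < n \<Longrightarrow> w \<in> cint n u w"
  by (auto simp: mem_cint_iff)

lemma cint_self: "u < n \<Longrightarrow> cint n u u = {u}"
  by (auto simp: mem_cint_iff)

lemma cint_pred_v_eq_lessThan: "v < n \<Longrightarrow> cint n v (pred_v n v) = {..<n}"
  by (auto simp: mem_cint_iff pred_v_eq pred_v_less)

lemma cint_succ_v_eq_lessThan: "v < n \<Longrightarrow> cint n (succ_v n v) v = {..<n}"
  by (auto simp: mem_cint_iff succ_v_eq succ_v_less)

lemma mem_cint_swap: "u < n \<Longrightarrow> w < n \<Longrightarrow> u \<noteq> w \<Longrightarrow> x < n \<Longrightarrow> x \<notin> cint n u w \<Longrightarrow> x \<in> cint n w u"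
  by (auto simp: mem_cint_iff split: if_splits)

lemma cint_subset_cint:
  assumes "u < n" "u' < n" "p < n" "q < n" "c < n"
    and "p \<in> cint n u u'" "q \<in> cint n u u'" "c \<notin> cint n u u'" "c \<notin> cint n p q"
  shows "cint n p q \<subseteq> cint n u u'"
  using assms by (auto simp: mem_cint_iff split: if_splits)

lemma cint_subset_if_not_subset:
  assumes "u < n" "u' < n" "s < n" "p < n" "s \<in> cint n u u'" "p \<in> cint n u u'"
    and "\<not> cint n s p \<subseteq> cint n u u'"
  shows "cint n p s \<subseteq> cint n u u'"
  using assms by (auto simp: mem_cint_iff split: if_splits)

lemma cint_succ_pred_eq_compl:
  assumes "u < n" "w < n" "x < n" "x \<notin> cint n u w"
  shows "cint n (succ_v n w) (pred_v n u) = {..<n} - cint n u w"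
  using assms
  by (auto simp: mem_cint_iff succ_v_eq succ_v_less pred_v_eq pred_v_less split: if_splits)

lemma card_cint_succ_pred:
  assumes "u < n" "w < n" "x < n" "x \<notin> cint n u w"
  shows "card (cint n (succ_v n w) (pred_v n u)) + card (cint n u w) = n"
proof -
  have "card ({..<n} - cint n u w) = n - card (cint n u w)"
    using card_Diff_subset[OF _ cint_subset_lessThan[OF assms(1,2)]]
      finite_subset[OF cint_subset_lessThan[OF assms(1,2)]] by simp
  moreover have "card (cint n u w) \<le> n"
    using card_mono[OF _ cint_subset_lessThan[OF assms(1,2)]] by simp
  ultimately show ?thesis using cint_succ_pred_eq_compl[OF assms] by simp
qed

lemma cdist_succ_v_left: "u < n \<Longrightarrow> w < n \<Longrightarrow> u \<noteq> w \<Longrightarrow> cdist n (succ_v n u) w + 1 = cdist n u w"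
  by (auto simp: cdist_eq succ_v_eq succ_v_less)

lemma cdist_pred_v_right: "u < n \<Longrightarrow> w < n \<Longrightarrow> u \<noteq> w \<Longrightarrow> cdist n u (pred_v n w) + 1 = cdist n u w"
  by (auto simp: cdist_eq pred_v_eq pred_v_less)

lemma cint_subset_insert_pred_v: "u < n \<Longrightarrow> w < n \<Longrightarrow> cint n u w \<subseteq> insert w (cint n u (pred_v n w))"
  by (auto simp: mem_cint_iff pred_v_eq pred_v_less split: if_splits)

lemma cint_subset_insert_succ_v: "u < n \<Longrightarrow> w < n \<Longrightarrow> cint n u w \<subseteq> insert u (cint n (succ_v n u) w)"
  by (auto simp: mem_cint_iff succ_v_eq succ_v_less split: if_splits)

lemma mem_cint_ho_iff:
  "u < n \<Longrightarrow> w < n \<Longrightarrow>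
    x \<in> cint_ho n u w \<longleftrightarrow> x < n \<and> (if u \<le> w then u \<le> x \<and> x < w else u \<le> x \<or> x < w)"
  by (auto simp: mem_cint_ho_iff_cdist cdist_eq split: if_splits)

lemma succ_pred_v: "u < n \<Longrightarrow> succ_v n (pred_v n u) = u"
  by (auto simp: succ_v_eq pred_v_eq pred_v_less)

lemma pred_succ_v: "u < n \<Longrightarrow> pred_v n (succ_v n u) = u"
  by (auto simp: succ_v_eq pred_v_eq succ_v_less)

lemma start_not_mem_cint_succ_v: "u < n \<Longrightarrow> w < n \<Longrightarrow> u \<noteq> w \<Longrightarrow> u \<notin> cint n (succ_v n u) w"
  by (auto simp: mem_cint_iff succ_v_eq succ_v_less)

lemma end_not_mem_cint_pred_v: "u < n \<Longrightarrow> w < n \<Longrightarrow> u \<noteq> w \<Longrightarrow> w \<notin> cint n u (pred_v n w)"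
  by (auto simp: mem_cint_iff pred_v_eq pred_v_less)

lemma cint_succ_v_subset: "u < n \<Longrightarrow> w < n \<Longrightarrow> u \<noteq> w \<Longrightarrow> cint n (succ_v n u) w \<subseteq> cint n u w"
  by (auto simp: mem_cint_iff succ_v_eq succ_v_less split: if_splits)

lemma cint_subset_cint_same_end: "u < n \<Longrightarrow> w < n \<Longrightarrow> a \<in> cint n u w \<Longrightarrow> cint n a w \<subseteq> cint n u w"
  by (auto simp: mem_cint_iff split: if_splits)

lemma cint_subset_cint_same_start: "u < n \<Longrightarrow> w < n \<Longrightarrow> a \<in> cint n u w \<Longrightarrow> cint n u a \<subseteq> cint n u w"
  by (auto simp: mem_cint_iff split: if_splits)

lemma mem_cint_iff_around:
  assumes "v < n" "a < n" "b < n" "a \<noteq> v" "b \<noteq> v" "a \<in> cint n v b"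
  shows "x \<in> cint n a b \<longleftrightarrow> x < n \<and> x \<noteq> v \<and> a \<in> cint n v x \<and> b \<in> cint n x v"
  using assms by (auto simp: mem_cint_iff split: if_splits)

lemma cint_disjoint_quad:
  assumes "a < n" "b < n" "c < n" "d < n" "b \<in> cint n a c" "c \<in> cint n a d"
    "b \<noteq> a" "b \<noteq> c" "c \<noteq> d" "d \<noteq> a"
  shows "cint n a b \<inter> cint n c d = {}" "cint n b c \<inter> cint n d a = {}"
  using assms by (auto simp: mem_cint_iff split: if_splits)

lemma pred_v_mem_cint: "u < n \<Longrightarrow> w < n \<Longrightarrow> u \<noteq> w \<Longrightarrow> pred_v n w \<in> cint n u w"
  by (auto simp: mem_cint_iff pred_v_eq pred_v_less)

lemma cint_succ_v_disjoint:
  assumes "v < n" "w < n" "y < n" "w \<in> cint n v y" "w \<noteq> v" "w \<noteq> y"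
  shows "cint n (succ_v n v) w \<inter> cint n y v = {}"
  using assms by (auto simp: mem_cint_iff succ_v_eq succ_v_less split: if_splits)

lemma cint_pred_v_disjoint:
  assumes "v < n" "w < n" "y < n" "w \<in> cint n v y" "w \<noteq> v" "w \<noteq> y"
  shows "cint n w (pred_v n y) \<inter> cint n y v = {}"
  using assms by (auto simp: mem_cint_iff pred_v_eq pred_v_less split: if_splits)

lemma mem_cint_ho_if_between:
  assumes "v < n" "w < n" "y < n" "w \<in> cint n v y" "w \<noteq> v" "w \<noteq> y"
    and "x \<in> cint n w (pred_v n v)" "x \<notin> cint n w (pred_v n y)"
  shows "x \<in> cint_ho n y v"
  using assms by (auto simp: mem_cint_iff mem_cint_ho_iff pred_v_eq pred_v_less split: if_splits)

lemma cint_subset_cint_succ_v: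
  "w < n \<Longrightarrow> v < n \<Longrightarrow> y < n \<Longrightarrow> y \<notin> cint n w v \<Longrightarrow> cint n w v \<subseteq> cint n (succ_v n y) v"
  by (auto simp: mem_cint_iff succ_v_eq succ_v_less split: if_splits)

lemma cint_subset_cint_pred_v:
  "v < n \<Longrightarrow> w < n \<Longrightarrow> y < n \<Longrightarrow> y \<notin> cint n v w \<Longrightarrow> cint n v w \<subseteq> cint n v (pred_v n y)"
  by (auto simp: mem_cint_iff pred_v_eq pred_v_less split: if_splits)

lemma pred_v_neq: "1 < n \<Longrightarrow> u < n \<Longrightarrow> pred_v n u \<noteq> u"
  by (auto simp: pred_v_eq)

lemma succ_v_neq: "1 < n \<Longrightarrow> u < n \<Longrightarrow> succ_v n u \<noteq> u"
  by (auto simp: succ_v_eq)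

lemma cdist_inj_left: "a < n \<Longrightarrow> b < n \<Longrightarrow> v < n \<Longrightarrow> cdist n a v = cdist n b v \<Longrightarrow> a = b"
  by (auto simp: cdist_eq split: if_splits)

lemma cdist_inj_right: "a < n \<Longrightarrow> b < n \<Longrightarrow> v < n \<Longrightarrow> cdist n v a = cdist n v b \<Longrightarrow> a = b"
  by (auto simp: cdist_eq split: if_splits)

lemma ex1_threshold_succ_v:
  assumes v: "v < n" and P: "\<not> P v" "P (succ_v n v)"
    and mono: "\<And>u u'. u < n \<Longrightarrow> u' < n \<Longrightarrow> P u \<Longrightarrow> u \<in> cint n u' v \<Longrightarrow> P u'"
  shows "\<exists>!u. u < n \<and> P u \<and> \<not> P (succ_v n u)"
proof -
  obtain u where u: "u < n" "P u" and u_min: "\<And>w. w < n \<Longrightarrow> P w \<Longrightarrow> cdist n u v \<le> cdist n w v"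
    using ex_has_least_nat[of "\<lambda>w. w < n \<and> P w" "succ_v n v" "\<lambda>w. cdist n w v"] P succ_v_less[OF v]
    by metis
  have step: "cdist n (succ_v n w) v < cdist n u v" if w: "w < n" "P w" "\<not> P (succ_v n w)" for w
  proof -
    have "u \<notin> cint n (succ_v n w) v" using mono[OF u(1) succ_v_less[OF w(1)] u(2)] w(3) by blast
    then show ?thesis using u(1) w(1) v by (simp add: mem_cint_iff_cdist_end succ_v_less not_le)
  qed
  show ?thesis
  proof
    have "u \<noteq> v" using u P by blast
    then show "u < n \<and> P u \<and> \<not> P (succ_v n u)"
      using u u_min[OF succ_v_less[OF u(1)]] cdist_succ_v_left[OF u(1) v] by fastforce
  next
    fix w assume w: "w < n \<and> P w \<and> \<not> P (succ_v n w)"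
    then have "w \<noteq> v" using P by blast
    then have "cdist n w v = cdist n u v"
      using step[of w] u_min[of w] w cdist_succ_v_left[OF _ v] by fastforce
    then show "w = u" using cdist_inj_left w u(1) v by blast
  qed
qed

lemma ex1_threshold_pred_v:
  assumes v: "v < n" and P: "\<not> P v" "P (pred_v n v)"
    and mono: "\<And>u u'. u < n \<Longrightarrow> u' < n \<Longrightarrow> P u \<Longrightarrow> u \<in> cint n v u' \<Longrightarrow> P u'"
  shows "\<exists>!u. u < n \<and> P u \<and> \<not> P (pred_v n u)"
proof -
  obtain u where u: "u < n" "P u" and u_min: "\<And>w. w < n \<Longrightarrow> P w \<Longrightarrow> cdist n v u \<le> cdist n v w"
    using ex_has_least_nat[of "\<lambda>w. w < n \<and> P w" "pred_v n v" "\<lambda>w. cdist n v w"] P pred_v_less[OF v]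
    by metis
  have step: "cdist n v (pred_v n w) < cdist n v u" if w: "w < n" "P w" "\<not> P (pred_v n w)" for w
  proof -
    have "u \<notin> cint n v (pred_v n w)" using mono[OF u(1) pred_v_less[OF w(1)] u(2)] w(3) by blast
    then show ?thesis using u(1) w(1) v by (simp add: mem_cint_iff_cdist pred_v_less not_le)
  qed
  show ?thesis
  proof
    have "u \<noteq> v" using u P by blast
    then show "u < n \<and> P u \<and> \<not> P (pred_v n u)"
      using u u_min[OF pred_v_less[OF u(1)]] cdist_pred_v_right[OF v u(1)] by fastforce
  next
    fix w assume w: "w < n \<and> P w \<and> \<not> P (pred_v n w)"
    then have "w \<noteq> v" using P by blast
    then have "cdist n v w = cdist n v u"
      using step[of w] u_min[of w] w cdist_pred_v_right[OF v] by fastforce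
    then show "w = u" using cdist_inj_right w u(1) v by blast
  qed
qed

section \<open>Transversal arcs of a saturated hypergraph\<close>

lemma ex_subset_card_with_two_points:
  assumes "finite C" "s \<in> C" "p \<in> C" "s \<noteq> p" "2 \<le> k" "k \<le> card C"
  shows "\<exists>e\<subseteq>C. s \<in> e \<and> p \<in> e \<and> card e = k"
proof -
  have "card C - card {s, p} \<le> card (C - {s, p})" by (rule diff_card_le_card_Diff) simp
  then have "k - 2 \<le> card (C - {s, p})" using assms(4,6) by simp
  then obtain S where S: "S \<subseteq> C - {s, p}" "card S = k - 2"
    using obtain_subset_with_card_n by metis
  moreover have "finite S" using S(1) assms(1) finite_subset by blast
  moreover have "s \<notin> S" "p \<notin> S" using S(1) by auto
  ultimately have "card (insert s (insert p S)) = k" using assms(4,5) by simp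
  then show ?thesis using S(1) assms(2,3) by (intro exI[of _ "insert s (insert p S)"]) auto
qed

locale M1_saturated_cgh =
  fixes n r :: nat and H :: "nat set set"
  assumes two_le_r: "2 \<le> r" and double_r_le_n: "2 * r \<le> n" and saturated: "M1_saturated n r H"
begin

definition transversal :: "nat set \<Rightarrow> bool" where
  "transversal A \<longleftrightarrow> (\<forall>h\<in>H. h \<inter> A \<noteq> {})"

lemma transversal_mono: "transversal A \<Longrightarrow> A \<subseteq> B \<Longrightarrow> transversal B"
  unfolding transversal_def by blast

lemma edge_subset: "h \<in> H \<Longrightarrow> h \<subseteq> {..<n}"
  using saturated unfolding M1_saturated_def cyc_vertices_def atLeast0LessThan by blast

lemma M1_free_H: "M1_free n H"
  using saturated unfolding M1_saturated_def by blast

lemma card_edge: "h \<in> H \<Longrightarrow> card h = r"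
  using saturated unfolding M1_saturated_def by auto

lemma finite_edge: "h \<in> H \<Longrightarrow> finite h"
  using card_edge two_le_r card.infinite by fastforce

lemma card_le_if_edge_subset: "h \<in> H \<Longrightarrow> h \<subseteq> A \<Longrightarrow> finite A \<Longrightarrow> r \<le> card A"
  using card_edge card_mono by fastforce

lemma edge_not_subset_singleton: "h \<in> H \<Longrightarrow> \<not> h \<subseteq> {x}"
  using card_le_if_edge_subset[of h "{x}"] two_le_r by auto

lemma transversal_if_edge_subset_cint:
  assumes "h \<in> H" "u < n" "u' < n" "h \<subseteq> cint n u u'"
  shows "transversal (cint n u u')"
proof (cases "u = u'")
  case True
  then show ?thesis using assms edge_not_subset_singleton cint_self by metis
next
  case False
  then show ?thesis
    using M1_free_H assms unfolding M1_free_def transversal_def by blast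
qed

lemma mem_H_if_covering_arcs_transversal:
  assumes e: "e \<subseteq> {..<n}" "card e = r"
    and arcs: "\<And>u u'. u < n \<Longrightarrow> u' < n \<Longrightarrow> u \<noteq> u' \<Longrightarrow> e \<subseteq> cint n u u' \<Longrightarrow>
      transversal (cint n u u')"
  shows "e \<in> H"
proof (rule ccontr)
  assume "e \<notin> H"
  moreover have "e \<subseteq> cyc_vertices n" using e(1) by (simp add: cyc_vertices_def atLeast0LessThan)
  ultimately have "\<not> M1_free n (insert e H)"
    using saturated e(2) unfolding M1_saturated_def by blast
  then obtain h1 h2 u u' where h: "h1 \<in> insert e H" "h2 \<in> insert e H" "u < n" "u' < n" "u \<noteq> u'"
    "h1 \<subseteq> cint n u u'" "h2 \<inter> cint n u u' = {}"
    unfolding M1_free_def by blast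
  have "e \<noteq> {}" using e two_le_r by auto
  then consider "h1 = e" "h2 \<in> H" | "h1 \<in> H" "h2 = e" | "h1 \<in> H" "h2 \<in> H"
    using h(1,2,6,7) by blast
  then show False
  proof cases
    case 1
    then show False using arcs[OF h(3-5)] h(6,7) unfolding transversal_def by blast
  next
    case 2
    obtain x where x: "x \<in> e" using \<open>e \<noteq> {}\<close> by blast
    let ?C = "cint n (succ_v n u') (pred_v n u)"
    have "x < n" "x \<notin> cint n u u'" using x e h(7) 2 by blast+
    then have C: "?C = {..<n} - cint n u u'" by (rule cint_succ_pred_eq_compl[OF h(3,4)])
    have "e \<subseteq> ?C" "h1 \<inter> ?C = {}"
      using C e h(6,7) edge_subset[OF 2(1)] 2 by blast+
    moreover have "succ_v n u' \<noteq> pred_v n u"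
      using \<open>e \<subseteq> ?C\<close> e cint_self[OF pred_v_less] h(3) two_le_r card_mono[of "{pred_v n u}" e]
      by fastforce
    ultimately show False
      using arcs[OF succ_v_less[OF h(4)] pred_v_less[OF h(3)]] 2(1)
      unfolding transversal_def by blast
  next
    case 3
    then show False using M1_free_H h unfolding M1_free_def by blast
  qed
qed

lemma H_nonempty: "H \<noteq> {}"
proof
  assume "H = {}"
  then have "transversal A" for A unfolding transversal_def by simp
  then have "{..<r} \<in> H"
    using mem_H_if_covering_arcs_transversal[of "{..<r}"] double_r_le_n by simp
  then show False using \<open>H = {}\<close> by simp
qed

lemma card_exchange:
  assumes "h \<in> H" "q \<in> h" "w \<notin> h"
  shows "card (insert w (h - {q})) = r"
  using assms finite_edge card_edge two_le_r by simp

text \<open>Every arc covering the new set either contains \<open>q\<close>, hence the old edge, or contains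
  the transversal arc \<open>[a, b]\<close>.\<close>
lemma exchange_mem_H:
  assumes h: "h \<in> H" "q \<in> h" and w: "w < n" "w \<notin> h"
    and ab: "a < n" "b < n" "a \<in> insert w (h - {q})" "b \<in> insert w (h - {q})"
    and q: "q \<notin> cint n a b" and T: "transversal (cint n a b)"
  shows "insert w (h - {q}) \<in> H"
proof (rule mem_H_if_covering_arcs_transversal)
  show "insert w (h - {q}) \<subseteq> {..<n}" using edge_subset[OF h(1)] w by blast
  show "card (insert w (h - {q})) = r" using card_exchange[OF h w(2)] .
next
  fix u u' assume u: "u < n" "u' < n" "u \<noteq> u'" and e: "insert w (h - {q}) \<subseteq> cint n u u'"
  show "transversal (cint n u u')"
  proof (cases "q \<in> cint n u u'")
    case True
    then have "h \<subseteq> cint n u u'" using e by blast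
    then show ?thesis using transversal_if_edge_subset_cint[OF h(1) u(1,2)] by blast
  next
    case False
    have "q < n" using edge_subset[OF h(1)] h(2) by blast
    then have "cint n a b \<subseteq> cint n u u'"
      using cint_subset_cint[OF u(1,2) ab(1,2) _ _ _ False q] ab(3,4) e by blast
    then show ?thesis using transversal_mono[OF T] by blast
  qed
qed

lemma transversal_if_card_compl_less:
  assumes "card ({..<n} - A) < r"
  shows "transversal A"
  unfolding transversal_def
proof
  fix h assume h: "h \<in> H"
  show "h \<inter> A \<noteq> {}"
  proof
    assume "h \<inter> A = {}"
    then have "h \<subseteq> {..<n} - A" using edge_subset[OF h] by blast
    then have "r \<le> card ({..<n} - A)" using card_le_if_edge_subset[OF h] by simp
    then show False using assms by simp
  qed
qed

lemma cint_not_transversal_if_card_less: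
  assumes ab: "a < n" "b < n" and c: "c < n" "c \<notin> cint n a b"
    and card: "card (cint n a b) < r"
  shows "\<not> transversal (cint n a b)"
proof
  txt \<open>An \<open>r\<close>-set spanning the complementary arc is forced into \<open>H\<close> by saturation, yet it misses
    the transversal \<open>[a, b]\<close>.\<close>
  assume T: "transversal (cint n a b)"
  define s where "s = succ_v n b"
  define p where "p = pred_v n a"
  have sp: "s < n" "p < n" unfolding s_def p_def using ab by (simp_all add: succ_v_less pred_v_less)
  let ?D = "cint n a b" and ?C = "cint n s p"
  have C: "?C = {..<n} - ?D" unfolding s_def p_def by (rule cint_succ_pred_eq_compl[OF ab c])
  have "card ?C + card ?D = n" unfolding s_def p_def by (rule card_cint_succ_pred[OF ab c])
  then have card_C: "r < card ?C" using card double_r_le_n by linarith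
  have fin: "finite ?C" "finite ?D"
    using finite_subset[OF cint_subset_lessThan] ab sp by blast+
  have "s \<noteq> p" using card_C cint_self[OF sp(1)] two_le_r by auto
  then have "\<exists>e\<subseteq>?C. s \<in> e \<and> p \<in> e \<and> card e = r"
    using ex_subset_card_with_two_points[OF fin(1) start_mem_cint[OF sp] end_mem_cint[OF sp]]
      two_le_r card_C by simp
  then obtain e where e: "e \<subseteq> ?C" "s \<in> e" "p \<in> e" "card e = r" by blast
  have "e \<in> H"
  proof (rule mem_H_if_covering_arcs_transversal[OF _ e(4)])
    show "e \<subseteq> {..<n}" using e(1) C by blast
  next
    fix u u' assume u: "u < n" "u' < n" "u \<noteq> u'" and e_u: "e \<subseteq> cint n u u'"
    show "transversal (cint n u u')"
    proof (cases "?C \<subseteq> cint n u u'")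
      case True
      then have "{..<n} - cint n u u' \<subseteq> ?D" using C by blast
      then have "card ({..<n} - cint n u u') \<le> card ?D" by (rule card_mono[OF fin(2)])
      then have "card ({..<n} - cint n u u') < r" using card by linarith
      then show ?thesis by (rule transversal_if_card_compl_less)
    next
      case False
      have "s \<in> cint n u u'" "p \<in> cint n u u'" using e(2,3) e_u by blast+
      then have "cint n p s \<subseteq> cint n u u'"
        using cint_subset_if_not_subset[OF u(1,2) sp] False by blast
      moreover have "?D \<subseteq> cint n p s"
        using C mem_cint_swap[OF sp \<open>s \<noteq> p\<close>] cint_subset_lessThan[OF ab] by blast
      ultimately show ?thesis using transversal_mono[OF T] by blast
    qed
  qed
  moreover have "e \<inter> ?D = {}" using e(1) C by blast
  ultimately show False using T unfolding transversal_def by blast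
qed

lemma exchange_into_transversal_cint:
  assumes ab: "a < n" "b < n" and T: "transversal (cint n a b)"
    and h: "h \<in> H" "a \<in> h \<or> b \<in> h"
    and q: "q < n" "q \<notin> cint n a b" "h - {q} \<subseteq> cint n a b"
  shows "\<exists>e\<in>H. h - {q} \<subseteq> e \<and> e \<subseteq> cint n a b"
proof (cases "q \<in> h")
  case False
  then show ?thesis using h q by blast
next
  case True
  have "\<not> cint n a b \<subseteq> h"
  proof
    assume "cint n a b \<subseteq> h"
    then have "cint n a b \<subseteq> h - {q}" using q(2) by blast
    then have "card (cint n a b) \<le> card (h - {q})"
      using card_mono finite_edge[OF h(1)] by blast
    also have "\<dots> < r" using True card_edge[OF h(1)] finite_edge[OF h(1)] two_le_r by simp
    finally show False using cint_not_transversal_if_card_less[OF ab q(1,2)] T by blast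
  qed
  then obtain w0 where w0: "w0 \<in> cint n a b" "w0 \<notin> h" by blast
  define w where "w = (if a \<notin> h then a else if b \<notin> h then b else w0)"
  have w: "w \<in> cint n a b" "w \<notin> h"
    unfolding w_def using w0 start_mem_cint[OF ab] end_mem_cint[OF ab] by auto
  have "a \<in> insert w (h - {q})" "b \<in> insert w (h - {q})"
    unfolding w_def using h(2) q(2) start_mem_cint[OF ab] end_mem_cint[OF ab] by auto
  moreover have "w < n" using w(1) cint_subset_lessThan[OF ab] by blast
  ultimately have "insert w (h - {q}) \<in> H"
    using exchange_mem_H[OF h(1) True _ w(2) ab _ _ q(2) T] by blast
  then show ?thesis using w(1) q(3) by blast
qed

lemma transversal_lessThan: "transversal {..<n}"
  unfolding transversal_def using edge_subset edge_not_subset_singleton by blast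

lemma vertex_covered:
  assumes v: "v < n"
  shows "\<exists>h\<in>H. v \<in> h"
proof (rule ccontr)
  assume uncovered: "\<not> (\<exists>h\<in>H. v \<in> h)"
  have "pred_v n v < n \<and> transversal (cint n v (pred_v n v))"
    using cint_pred_v_eq_lessThan[OF v] pred_v_less[OF v] transversal_lessThan by simp
  then have "\<exists>z. (z < n \<and> transversal (cint n v z)) \<and>
      (\<forall>w. w < n \<and> transversal (cint n v w) \<longrightarrow> cdist n v z \<le> cdist n v w)"
    by (rule ex_has_least_nat)
  then obtain z where z: "z < n" "transversal (cint n v z)"
    and z_min: "\<And>w. w < n \<Longrightarrow> transversal (cint n v w) \<Longrightarrow> cdist n v z \<le> cdist n v w"
    by blast
  have "z \<noteq> v"
  proof
    assume "z = v"
    then have "transversal {v}" using z(2) cint_self[OF v] by simp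
    then show False using H_nonempty uncovered unfolding transversal_def by blast
  qed
  have "\<not> transversal (cint n v (pred_v n z))"
  proof
    assume "transversal (cint n v (pred_v n z))"
    then have "cdist n v z \<le> cdist n v (pred_v n z)" using z_min pred_v_less[OF z(1)] by blast
    then show False using cdist_pred_v_right[OF v z(1)] \<open>z \<noteq> v\<close> by simp
  qed
  then obtain g where g: "g \<in> H" "g \<inter> cint n v (pred_v n z) = {}" unfolding transversal_def by blast
  have g_z: "g \<inter> cint n v z \<subseteq> {z}" using g(2) cint_subset_insert_pred_v[OF v z(1)] by blast
  then obtain q where q: "q \<in> g" "q \<notin> cint n v z"
    using edge_not_subset_singleton[OF g(1)] by blast
  have "g \<inter> cint n v z \<noteq> {}" using z(2) g(1) unfolding transversal_def by blast
  then have "z \<in> g - {q}" using g_z q(2) by blast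
  then have "insert v (g - {q}) \<in> H"
    using exchange_mem_H[OF g(1) q(1) v _ v z(1) _ _ q(2) z(2)] uncovered g(1) by blast
  then show False using uncovered by blast
qed

definition edge_in_cint_to :: "nat \<Rightarrow> nat \<Rightarrow> bool" where
  "edge_in_cint_to v u \<longleftrightarrow> (\<exists>h\<in>H. v \<in> h \<and> h \<subseteq> cint n u v)"

definition edge_in_cint_from :: "nat \<Rightarrow> nat \<Rightarrow> bool" where
  "edge_in_cint_from v u \<longleftrightarrow> (\<exists>h\<in>H. v \<in> h \<and> h \<subseteq> cint n v u)"

lemma lam_spec:
  assumes v: "v < n"
  shows "lam n H v < n \<and> edge_in_cint_to v (lam n H v) \<and>
    \<not> edge_in_cint_to v (succ_v n (lam n H v))"
proof -
  have "\<exists>!u. u < n \<and> edge_in_cint_to v u \<and> \<not> edge_in_cint_to v (succ_v n u)"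
  proof (rule ex1_threshold_succ_v[OF v])
    show "\<not> edge_in_cint_to v v"
      using edge_not_subset_singleton by (simp add: edge_in_cint_to_def cint_self[OF v])
    show "edge_in_cint_to v (succ_v n v)"
      using vertex_covered[OF v] edge_subset
      unfolding edge_in_cint_to_def cint_succ_v_eq_lessThan[OF v] by blast
  next
    fix u u' assume "u < n" "u' < n" "edge_in_cint_to v u" "u \<in> cint n u' v"
    then show "edge_in_cint_to v u'"
      using cint_subset_cint_same_end[OF _ v] unfolding edge_in_cint_to_def by blast
  qed
  then show ?thesis
    unfolding lam_def edge_in_cint_to_def[symmetric] by (rule theI')
qed

lemma rho_spec:
  assumes v: "v < n"
  shows "rho n H v < n \<and> edge_in_cint_from v (rho n H v) \<and>
    \<not> edge_in_cint_from v (pred_v n (rho n H v))"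
proof -
  have "\<exists>!u. u < n \<and> edge_in_cint_from v u \<and> \<not> edge_in_cint_from v (pred_v n u)"
  proof (rule ex1_threshold_pred_v[OF v])
    show "\<not> edge_in_cint_from v v"
      using edge_not_subset_singleton by (simp add: edge_in_cint_from_def cint_self[OF v])
    show "edge_in_cint_from v (pred_v n v)"
      using vertex_covered[OF v] edge_subset
      unfolding edge_in_cint_from_def cint_pred_v_eq_lessThan[OF v] by blast
  next
    fix u u' assume "u < n" "u' < n" "edge_in_cint_from v u" "u \<in> cint n v u'"
    then show "edge_in_cint_from v u'"
      using cint_subset_cint_same_start[OF v] unfolding edge_in_cint_from_def by blast
  qed
  then show ?thesis
    unfolding rho_def edge_in_cint_from_def[symmetric] by (rule theI')
qed

lemma lam_less: "v < n \<Longrightarrow> lam n H v < n"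
  using lam_spec by blast

lemma rho_less: "v < n \<Longrightarrow> rho n H v < n"
  using rho_spec by blast

lemma lam_neq: "v < n \<Longrightarrow> lam n H v \<noteq> v"
  using lam_spec edge_not_subset_singleton by (fastforce simp: edge_in_cint_to_def cint_self)

lemma rho_neq: "v < n \<Longrightarrow> rho n H v \<noteq> v"
  using rho_spec edge_not_subset_singleton by (fastforce simp: edge_in_cint_from_def cint_self)

lemma not_transversal_cint_succ_v_lam:
  assumes v: "v < n"
  shows "\<not> transversal (cint n (succ_v n (lam n H v)) v)"
proof
  define y where "y = lam n H v"
  have y: "y < n" "y \<noteq> v" unfolding y_def using lam_less[OF v] lam_neq[OF v] by auto
  assume "transversal (cint n (succ_v n (lam n H v)) v)"
  then have T: "transversal (cint n (succ_v n y) v)" unfolding y_def .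
  obtain h where h: "h \<in> H" "v \<in> h" "h \<subseteq> cint n y v"
    using lam_spec[OF v] unfolding y_def edge_in_cint_to_def by blast
  have "\<exists>e\<in>H. h - {y} \<subseteq> e \<and> e \<subseteq> cint n (succ_v n y) v"
  proof (rule exchange_into_transversal_cint[OF succ_v_less[OF y(1)] v T h(1) _ y(1)])
    show "y \<notin> cint n (succ_v n y) v" using start_not_mem_cint_succ_v[OF y(1) v y(2)] .
    show "h - {y} \<subseteq> cint n (succ_v n y) v" using h(3) cint_subset_insert_succ_v[OF y(1) v] by blast
  qed (use h(2) in blast)
  then have "edge_in_cint_to v (succ_v n y)"
    unfolding edge_in_cint_to_def using h(2) y(2) by blast
  then show False using lam_spec[OF v] unfolding y_def by blast
qed

lemma not_transversal_cint_pred_v_rho: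
  assumes v: "v < n"
  shows "\<not> transversal (cint n v (pred_v n (rho n H v)))"
proof
  define z where "z = rho n H v"
  have z: "z < n" "z \<noteq> v" unfolding z_def using rho_less[OF v] rho_neq[OF v] by auto
  assume "transversal (cint n v (pred_v n (rho n H v)))"
  then have T: "transversal (cint n v (pred_v n z))" unfolding z_def .
  obtain h where h: "h \<in> H" "v \<in> h" "h \<subseteq> cint n v z"
    using rho_spec[OF v] unfolding z_def edge_in_cint_from_def by blast
  have "\<exists>e\<in>H. h - {z} \<subseteq> e \<and> e \<subseteq> cint n v (pred_v n z)"
  proof (rule exchange_into_transversal_cint[OF v pred_v_less[OF z(1)] T h(1) _ z(1)])
    show "z \<notin> cint n v (pred_v n z)" using end_not_mem_cint_pred_v[OF v z(1)] z(2) by blast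
    show "h - {z} \<subseteq> cint n v (pred_v n z)" using h(3) cint_subset_insert_pred_v[OF v z(1)] by blast
  qed (use h(2) in blast)
  then have "edge_in_cint_from v (pred_v n z)"
    unfolding edge_in_cint_from_def using h(2) z(2) by blast
  then show False using rho_spec[OF v] unfolding z_def by blast
qed

lemma transversal_cint_to_iff:
  assumes w: "w < n" and v: "v < n"
  shows "transversal (cint n w v) \<longleftrightarrow> lam n H v \<in> cint n w v"
proof
  assume "transversal (cint n w v)"
  then show "lam n H v \<in> cint n w v"
    using not_transversal_cint_succ_v_lam[OF v] transversal_mono
      cint_subset_cint_succ_v[OF w v lam_less[OF v]] by blast
next
  assume "lam n H v \<in> cint n w v"
  moreover obtain h where "h \<in> H" "h \<subseteq> cint n (lam n H v) v"
    using lam_spec[OF v] unfolding edge_in_cint_to_def by blast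
  ultimately show "transversal (cint n w v)"
    using cint_subset_cint_same_end[OF w v] transversal_if_edge_subset_cint[OF _ w v] by blast
qed

lemma transversal_cint_from_iff:
  assumes v: "v < n" and w: "w < n"
  shows "transversal (cint n v w) \<longleftrightarrow> rho n H v \<in> cint n v w"
proof
  assume "transversal (cint n v w)"
  then show "rho n H v \<in> cint n v w"
    using not_transversal_cint_pred_v_rho[OF v] transversal_mono
      cint_subset_cint_pred_v[OF v w rho_less[OF v]] by blast
next
  assume "rho n H v \<in> cint n v w"
  moreover obtain h where "h \<in> H" "h \<subseteq> cint n v (rho n H v)"
    using rho_spec[OF v] unfolding edge_in_cint_from_def by blast
  ultimately show "transversal (cint n v w)"
    using cint_subset_cint_same_start[OF v w] transversal_if_edge_subset_cint[OF _ v w] by blast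
qed

lemma transversal_cint_iff_edge_subset:
  assumes "u < n" "w < n"
  shows "transversal (cint n u w) \<longleftrightarrow> (\<exists>h\<in>H. h \<subseteq> cint n u w)"
proof
  assume "transversal (cint n u w)"
  then have "rho n H u \<in> cint n u w" using transversal_cint_from_iff[OF assms] by blast
  then have sub: "cint n u (rho n H u) \<subseteq> cint n u w" by (rule cint_subset_cint_same_start[OF assms])
  obtain h where "h \<in> H" "h \<subseteq> cint n u (rho n H u)"
    using rho_spec[OF assms(1)] unfolding edge_in_cint_from_def by blast
  then show "\<exists>h\<in>H. h \<subseteq> cint n u w" using sub by blast
next
  assume "\<exists>h\<in>H. h \<subseteq> cint n u w"
  then show "transversal (cint n u w)" using transversal_if_edge_subset_cint assms by blast
qed

lemma disjoint_cints_not_both_transversal: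
  assumes "a < n" "b < n" "cint n a b \<inter> cint n c d = {}" "transversal (cint n a b)"
  shows "\<not> transversal (cint n c d)"
proof
  assume "transversal (cint n c d)"
  moreover obtain h where "h \<in> H" "h \<subseteq> cint n a b"
    using assms(4) transversal_cint_iff_edge_subset[OF assms(1,2)] by blast
  ultimately show False using assms(3) unfolding transversal_def by blast
qed

lemma not_transversal_singleton: "v < n \<Longrightarrow> \<not> transversal (cint n v v)"
  using transversal_cint_to_iff[of v v] lam_neq[of v] by (simp add: cint_self)

lemma transversal_complement_if_not_transversal:
  assumes "a < n" "b < n" "\<not> transversal (cint n a b)"
  shows "transversal (cint n (succ_v n b) (pred_v n a))"
proof -
  obtain h where h: "h \<in> H" "h \<inter> cint n a b = {}" using assms(3) unfolding transversal_def by blast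
  then obtain c where "c \<in> h" using edge_not_subset_singleton by blast
  then have "c < n" "c \<notin> cint n a b" using h edge_subset by blast+
  then have "h \<subseteq> cint n (succ_v n b) (pred_v n a)"
    using cint_succ_pred_eq_compl[OF assms(1,2)] h edge_subset by blast
  then show ?thesis
    using transversal_if_edge_subset_cint[OF h(1)] succ_v_less pred_v_less assms by blast
qed

lemma lam_eqI:
  assumes u: "u < n" and v: "v < n"
    and "transversal (cint n u v)" "\<not> transversal (cint n (succ_v n u) v)"
  shows "lam n H v = u"
proof -
  have "lam n H v \<in> cint n u v" "lam n H v \<notin> cint n (succ_v n u) v"
    using assms transversal_cint_to_iff[OF u v] transversal_cint_to_iff[OF succ_v_less[OF u] v]
    by blast+
  then show ?thesis using cint_subset_insert_succ_v[OF u v] by blast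
qed

lemma rho_eqI:
  assumes v: "v < n" and u: "u < n"
    and "transversal (cint n v u)" "\<not> transversal (cint n v (pred_v n u))"
  shows "rho n H v = u"
proof -
  have "rho n H v \<in> cint n v u" "rho n H v \<notin> cint n v (pred_v n u)"
    using assms transversal_cint_from_iff[OF v u] transversal_cint_from_iff[OF v pred_v_less[OF u]]
    by blast+
  then show ?thesis using cint_subset_insert_pred_v[OF v u] by blast
qed

section \<open>The intervals \<open>[\<rho>(v), \<lambda>(v)]\<close>\<close>

lemma one_less_n: "1 < n"
  using two_le_r double_r_le_n by linarith

lemma transversal_cint_lam:
  assumes v: "v < n"
  shows "transversal (cint n (lam n H v) v)"
  using transversal_cint_to_iff[OF lam_less[OF v] v] start_mem_cint[OF lam_less[OF v] v] by blast

lemma rho_succ_v_eq_lam: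
  assumes v: "v < n"
  shows "rho n H (succ_v n v) = lam n H v"
proof -
  define y where "y = lam n H v"
  have y: "y < n" "y \<noteq> v" unfolding y_def using lam_less[OF v] lam_neq[OF v] by auto
  have sv: "succ_v n v < n" using succ_v_less[OF v] .
  have "transversal (cint n (succ_v n v) y)"
    using transversal_complement_if_not_transversal[OF succ_v_less[OF y(1)] v]
      not_transversal_cint_succ_v_lam[OF v] pred_succ_v[OF y(1)] unfolding y_def by simp
  moreover have "\<not> transversal (cint n (succ_v n v) (pred_v n y))"
  proof -
    have "y \<noteq> succ_v n v" using calculation not_transversal_singleton[OF sv] by blast
    then have "cint n (succ_v n v) (pred_v n y) \<inter> cint n y v = {}"
      using cint_succ_v_disjoint[OF v pred_v_less[OF y(1)] y(1)] pred_v_mem_cint[OF v y(1)]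
        succ_pred_v[OF y(1)] pred_v_neq[OF one_less_n y(1)] y(2) by metis
    moreover have "transversal (cint n y v)" using transversal_cint_lam[OF v] unfolding y_def .
    ultimately show ?thesis
      using disjoint_cints_not_both_transversal[OF y(1) v] by (simp add: Int_commute)
  qed
  ultimately show ?thesis using rho_eqI[OF sv y(1)] unfolding y_def by blast
qed

lemma rho_mem_cint_lam:
  assumes v: "v < n"
  shows "rho n H v \<in> cint n v (lam n H v)"
proof -
  have "transversal (cint n (succ_v n v) (lam n H v))"
    using transversal_cint_from_iff[OF succ_v_less[OF v] lam_less[OF v]] rho_succ_v_eq_lam[OF v]
      end_mem_cint[OF succ_v_less[OF v] lam_less[OF v]] by simp
  then have "transversal (cint n v (lam n H v))"
    using transversal_mono cint_succ_v_subset[OF v lam_less[OF v]] lam_neq[OF v] by metis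
  then show ?thesis using transversal_cint_from_iff[OF v lam_less[OF v]] by blast
qed

lemma mem_cint_rho_lam_iff:
  assumes v: "v < n"
  shows "x \<in> cint n (rho n H v) (lam n H v) \<longleftrightarrow>
    x < n \<and> x \<noteq> v \<and> transversal (cint n v x) \<and> transversal (cint n x v)"
  using mem_cint_iff_around[OF v rho_less[OF v] lam_less[OF v] rho_neq[OF v] lam_neq[OF v]
      rho_mem_cint_lam[OF v]]
    transversal_cint_from_iff[OF v] transversal_cint_to_iff[OF _ v] by blast

lemma mem_cint_rho_lam_sym:
  assumes "v < n" "x < n"
  shows "x \<in> cint n (rho n H v) (lam n H v) \<longleftrightarrow> v \<in> cint n (rho n H x) (lam n H x)"
  using mem_cint_rho_lam_iff assms by blast

text \<open>Whatever the cyclic order of \<open>i, j, x, x'\<close>, two of the transversal arcs between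
  \<open>{i, j}\<close> and \<open>{x, x'}\<close> are disjoint.\<close>
lemma eq_if_mem_cint_rho_lam_inter:
  assumes i: "i < n" and j: "j < n" and "i \<noteq> j"
    and x: "x \<in> cint n (rho n H i) (lam n H i) \<inter> cint n (rho n H j) (lam n H j)"
    and x': "x' \<in> cint n (rho n H i) (lam n H i) \<inter> cint n (rho n H j) (lam n H j)"
  shows "x = x'"
proof (rule ccontr)
  assume "x \<noteq> x'"
  note T = mem_cint_rho_lam_iff[OF i] mem_cint_rho_lam_iff[OF j]
  have n: "x < n" "x' < n" using x x' T by blast+
  note disj = disjoint_cints_not_both_transversal
  note links = \<open>i \<noteq> j\<close> \<open>x \<noteq> x'\<close> x x' T
  consider "j \<in> cint n i x" "x \<in> cint n i x'" | "j \<in> cint n i x'" "x' \<in> cint n i x"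
    | "x \<in> cint n i j" "j \<in> cint n i x'" | "x \<in> cint n i x'" "x' \<in> cint n i j"
    | "x' \<in> cint n i j" "j \<in> cint n i x" | "x' \<in> cint n i x" "x \<in> cint n i j"
    using n i j by (simp add: mem_cint_iff_cdist) (meson le_cases)
  then show False
  proof cases
    case 1
    show False using cint_disjoint_quad(2)[OF i j n 1] disj[OF j n(1)] links by blast
  next
    case 2
    show False using cint_disjoint_quad(2)[OF i j n(2,1) 2] disj[OF j n(2)] links by blast
  next
    case 3
    show False using cint_disjoint_quad(1)[OF i n(1) j n(2) 3] disj[OF i n(1)] links by blast
  next
    case 4
    show False using cint_disjoint_quad(1)[OF i n j 4] disj[OF i n(1)] links by blast
  next
    case 5
    show False using cint_disjoint_quad(1)[OF i n(2) j n(1) 5] disj[OF i n(2)] links by blast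
  next
    case 6
    show False using cint_disjoint_quad(1)[OF i n(2,1) j 6] disj[OF i n(2)] links by blast
  qed
qed

lemma card_cint_rho_lam_inter_le_1:
  assumes "i < n" "j < n" "i \<noteq> j"
  shows "card (cint n (rho n H i) (lam n H i) \<inter> cint n (rho n H j) (lam n H j)) \<le> 1"
proof -
  have "finite (cint n (rho n H i) (lam n H i))"
    using finite_subset[OF cint_subset_lessThan] rho_less lam_less assms(1) by blast
  then show ?thesis using eq_if_mem_cint_rho_lam_inter[OF assms] by (simp add: card_le_Suc0_iff_eq)
qed

lemma ex1_cint_rho_lam_contains_succ_v:
  assumes j: "j < n"
  shows "\<exists>!i. i < n \<and> j \<in> cint n (rho n H i) (lam n H i) \<and>
    succ_v n j \<in> cint n (rho n H i) (lam n H i)"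
proof
  let ?l = "lam n H j" and ?sj = "succ_v n j"
  have l: "?l < n" and sj: "?sj < n" using lam_less[OF j] succ_v_less[OF j] .
  have l_mem: "?l \<in> cint n (rho n H j) (lam n H j)" "?l \<in> cint n (rho n H ?sj) (lam n H ?sj)"
    using end_mem_cint[OF rho_less[OF j] l] start_mem_cint[OF l lam_less[OF sj]]
      rho_succ_v_eq_lam[OF j] by simp_all
  then show "?l < n \<and> j \<in> cint n (rho n H ?l) (lam n H ?l) \<and> ?sj \<in> cint n (rho n H ?l) (lam n H ?l)"
    using mem_cint_rho_lam_sym[OF j l] mem_cint_rho_lam_sym[OF sj l] l by blast
  fix i assume "i < n \<and> j \<in> cint n (rho n H i) (lam n H i) \<and> ?sj \<in> cint n (rho n H i) (lam n H i)"
  then have "i \<in> cint n (rho n H j) (lam n H j) \<inter> cint n (rho n H ?sj) (lam n H ?sj)"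
    using mem_cint_rho_lam_sym[OF j] mem_cint_rho_lam_sym[OF sj] by blast
  moreover have "j \<noteq> ?sj" using succ_v_neq[OF one_less_n j] by simp
  ultimately show "i = ?l"
    using eq_if_mem_cint_rho_lam_inter[OF j sj] l_mem by blast
qed

lemma lam_rho_eq:
  assumes v: "v < n" and ne: "lam n H v \<noteq> rho n H v"
  shows "lam n H (rho n H v) = v"
proof (rule lam_eqI[OF v rho_less[OF v]])
  let ?y = "lam n H v" and ?z = "rho n H v"
  show "transversal (cint n v ?z)"
    using transversal_cint_from_iff[OF v rho_less[OF v]] end_mem_cint[OF v rho_less[OF v]] by blast
  have "cint n (succ_v n v) ?z \<inter> cint n ?y v = {}"
    using cint_succ_v_disjoint[OF v rho_less[OF v] lam_less[OF v] rho_mem_cint_lam[OF v]]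
      rho_neq[OF v] ne by simp
  then show "\<not> transversal (cint n (succ_v n v) ?z)"
    using disjoint_cints_not_both_transversal[OF lam_less[OF v] v] transversal_cint_lam[OF v]
    by (simp add: Int_commute)
qed

lemma rho_rho_mem_cint_ho:
  assumes v: "v < n" and ne: "lam n H v \<noteq> rho n H v"
  shows "rho n H (rho n H v) \<in> cint_ho n (lam n H v) v"
proof (rule mem_cint_ho_if_between[OF v rho_less[OF v] lam_less[OF v] rho_mem_cint_lam[OF v]])
  let ?y = "lam n H v" and ?z = "rho n H v"
  have z: "?z < n" using rho_less[OF v] .
  show "?z \<noteq> v" "?z \<noteq> ?y" using rho_neq[OF v] ne by simp_all
  have "transversal (cint n ?z (pred_v n v))"
    using transversal_complement_if_not_transversal[OF v pred_v_less[OF z]]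
      not_transversal_cint_pred_v_rho[OF v] succ_pred_v[OF z] by simp
  then show "rho n H ?z \<in> cint n ?z (pred_v n v)"
    using transversal_cint_from_iff[OF z pred_v_less[OF v]] by blast
  have "cint n ?z (pred_v n ?y) \<inter> cint n ?y v = {}"
    using cint_pred_v_disjoint[OF v z lam_less[OF v] rho_mem_cint_lam[OF v]] rho_neq[OF v] ne
    by simp
  then have "\<not> transversal (cint n ?z (pred_v n ?y))"
    using disjoint_cints_not_both_transversal[OF lam_less[OF v] v] transversal_cint_lam[OF v]
    by (simp add: Int_commute)
  then show "rho n H ?z \<notin> cint n ?z (pred_v n ?y)"
    using transversal_cint_from_iff[OF z pred_v_less[OF lam_less[OF v]]] by blast
qed

end

theorem proposition3p5:
  fixes n r :: nat and H :: "nat set set"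
  assumes "r \<ge> 2" and "n \<ge> 2 * r" and "M1_saturated n r H"
  shows "(\<forall>i<n. rho n H ((i + 1) mod n) = lam n H i)
    \<and> (\<forall>i<n. \<forall>j<n. i \<noteq> j \<longrightarrow>
          card (cint n (rho n H i) (lam n H i) \<inter> cint n (rho n H j) (lam n H j)) \<le> 1)
    \<and> (\<forall>j<n. \<exists>!i. i < n \<and> j \<in> cint n (rho n H i) (lam n H i)
                      \<and> (j + 1) mod n \<in> cint n (rho n H i) (lam n H i))
    \<and> (\<forall>i<n. lam n H i \<noteq> rho n H i \<longrightarrow>
          lam n H (rho n H i) = i \<and> rho n H (rho n H i) \<in> cint_ho n (lam n H i) i)"
proof -
  interpret M1_saturated_cgh n r H
    using assms by unfold_locales
  show ?thesis
    using rho_succ_v_eq_lam card_cint_rho_lam_inter_le_1 ex1_cint_rho_lam_contains_succ_v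
      lam_rho_eq rho_rho_mem_cint_ho
    unfolding succ_v_def by blast
qed

end
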